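(* Assume (A1) and that $b\in\mathcal C^1_{\mathcal P}(\mathbb R^d\times\mathring\Theta)$. Then the deterministic function $[0,T]\ni s\mapsto X^0_s\in\mathbb R^d$ has bounded variation on $[0,T]$.
   Context: Fix $T>0$, $\alpha\in(1/2,1)$, $K(u)=\frac{u^{\alpha-1}}{\Gamma(\alpha)}\mathbf 1_{u>0}$. Let $\Theta\subset\mathbb R^{d_\Theta}$ be compact and convex with nonempty interior $\mathring\Theta$, $\theta^\star\in\mathring\Theta$, $x_0\in\mathbb R^d$, $a:\mathbb R^d\to\mathbb R^{d\times r}$, $b:\mathbb R^d\times\Theta\to\mathbb R^d$. Assumption (A1): $a$ and $b$ are continuous and there is $C>0$ with $|a(x)-a(x')|\le C|x-x'|$ and $|b(x,\theta)-b(x',\theta)|\le C|x-x'|$ for all $x,x'$, $\theta$. $X^0$ denotes the solution on $[0,T]$ of the deterministic Volterra equation $X^0_t=x_0+\int_0^tK(t-s)b(X^0_s,\theta^\star)\,ds$. For an integer $k\ge1$, $\mathcal C^k_{\mathcal P}(\mathbb R^d\times\mathring\Theta,E)$ is the set of $f:\mathbb R^d\times\mathring\Theta\to E$ ($E$ finite-dimensional) such that all partial derivatives $\partial^{i+j}f/\partial x^i\partial\theta^j$ with $0\le i+j\le k$ exist, are continuous on $\mathbb R^d\times\mathring\Theta$, and satisfy $\sup_{\theta\in\mathring\Theta}\|\partial^{i+j}f(x,\theta)/\partial x^i\partial\theta^j\|\le c(1+|x|^c)$ for some $c>0$. *)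

theory Defs
  imports "HOL-Analysis.Analysis"
begin

definition frac_kernel :: "real \<Rightarrow> real \<Rightarrow> real" where
  "frac_kernel \<alpha> u = (if u > 0 then u powr (\<alpha> - 1) / Gamma \<alpha> else 0)"

definition bounded_variation_on ::
  "real \<Rightarrow> real \<Rightarrow> (real \<Rightarrow> 'e::real_normed_vector) \<Rightarrow> bool" where
  "bounded_variation_on a b f \<longleftrightarrow>
     (\<exists>M. \<forall>(n::nat) (t::nat \<Rightarrow> real).
        (\<forall>i\<le>n. t i \<in> {a..b}) \<and> (\<forall>i<n. t i \<le> t (Suc i)) \<longrightarrow>
        (\<Sum>i<n. norm (f (t (Suc i)) - f (t i))) \<le> M)"

definition C1P ::
  "(real^'d \<Rightarrow> real^'k \<Rightarrow> 'e::euclidean_space) \<Rightarrow> (real^'k) set \<Rightarrow> bool" where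
  "C1P f U \<longleftrightarrow>
     (\<exists>(Dx :: real^'d \<Rightarrow> real^'k \<Rightarrow> ((real^'d) \<Rightarrow>\<^sub>L 'e))
       (D\<theta> :: real^'d \<Rightarrow> real^'k \<Rightarrow> ((real^'k) \<Rightarrow>\<^sub>L 'e)) (c::real).
        c > 0 \<and>
        (\<forall>x. \<forall>\<theta>\<in>U.
           ((\<lambda>y. f y \<theta>) has_derivative blinfun_apply (Dx x \<theta>)) (at x) \<and>
           ((\<lambda>\<eta>. f x \<eta>) has_derivative blinfun_apply (D\<theta> x \<theta>)) (at \<theta>)) \<and>
        continuous_on (UNIV \<times> U) (\<lambda>(x, \<theta>). f x \<theta>) \<and>
        continuous_on (UNIV \<times> U) (\<lambda>(x, \<theta>). Dx x \<theta>) \<and>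
        continuous_on (UNIV \<times> U) (\<lambda>(x, \<theta>). D\<theta> x \<theta>) \<and>
        (\<forall>x. \<forall>\<theta>\<in>U.
           norm (f x \<theta>) \<le> c * (1 + norm x powr c) \<and>
           norm (Dx x \<theta>) \<le> c * (1 + norm x powr c) \<and>
           norm (D\<theta> x \<theta>) \<le> c * (1 + norm x powr c)))"

end

theory Submission
  imports Defs
begin

(* Write the equation as X t = x0 + \<integral>\<^sub>0\<^sup>t K(u) g(t - u) du with g = b(X, \<theta>s), which is
   bounded and Lipschitz in X. For a partition t\<^sub>0 \<le> ... \<le> t\<^sub>n of [0, r], the increment of the
   integrand in t is bounded by the jump of the cutoff 1{u \<le> t} (total mass G \<integral>K) plus C K(u)
   times the increments of X along the partition shifted left by u, which lies in [0, r - u].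
   Hence the supremum V(r) of n-step variation sums over [0, r] satisfies
     V(r) \<le> G \<integral>\<^sub>0\<^sup>T K + C V(r) \<integral>\<^sub>0\<^sup>\<delta> K + C V(r - \<delta>) \<integral>\<^sub>0\<^sup>T K.
   Choosing \<delta> with C \<integral>\<^sub>0\<^sup>\<delta> K \<le> 1/2 absorbs the middle term, and iterating the resulting
   delay inequality \<lceil>T/\<delta>\<rceil> times bounds V(T) independently of n. *)

lemma has_integral_reflect_ivl_0:
  fixes f :: "real \<Rightarrow> 'a::real_normed_vector"
  assumes "(f has_integral I) {0..t}"
  shows "((\<lambda>u. f (t - u)) has_integral I) {0..t}"
proof -
  have "((\<lambda>x. f (x + t)) has_integral I) {0-t..t-t}"
    using has_integral_shift_real_ivl[OF assms] .
  then have "((\<lambda>x. f (-x + t)) has_integral I) {-(t-t)..-(0-t)}"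
    by (subst has_integral_reflect_real) simp
  then show ?thesis by (simp add: algebra_simps)
qed

lemma sum_norm_has_integral_le:
  fixes d :: "'i \<Rightarrow> 'n::euclidean_space \<Rightarrow> 'a::real_inner"
  assumes "finite A"
    and d: "\<And>i. i \<in> A \<Longrightarrow> (d i has_integral I i) S"
    and h: "(h has_integral H) S"
    and le: "\<And>u. u \<in> S \<Longrightarrow> (\<Sum>i\<in>A. norm (d i u)) \<le> h u"
  shows "(\<Sum>i\<in>A. norm (I i)) \<le> H"
proof -
  \<comment> \<open>Pairing d i with sgn (I i) avoids needing integrability of norm (d i).\<close>
  have "((\<lambda>u. d i u \<bullet> sgn (I i)) has_integral norm (I i)) S" if "i \<in> A" for i
  proof -
    have "I i \<bullet> sgn (I i) = norm (I i)"
      by (cases "I i = 0") (simp_all add: sgn_div_norm power2_norm_eq_inner [symmetric] power2_eq_square)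
    moreover have "((\<lambda>u. d i u \<bullet> sgn (I i)) has_integral I i \<bullet> sgn (I i)) S"
      using has_integral_linear[OF d[OF that] bounded_linear_inner_left] by (simp add: o_def)
    ultimately show ?thesis
      by simp
  qed
  then have "((\<lambda>u. \<Sum>i\<in>A. d i u \<bullet> sgn (I i)) has_integral (\<Sum>i\<in>A. norm (I i))) S"
    by (intro has_integral_sum assms(1))
  moreover note h
  moreover have "(\<Sum>i\<in>A. d i u \<bullet> sgn (I i)) \<le> h u" if "u \<in> S" for u
  proof -
    have "d i u \<bullet> sgn (I i) \<le> norm (d i u)" for i
      using norm_cauchy_schwarz[of "d i u" "sgn (I i)"] by (cases "I i = 0") (simp_all add: norm_sgn)
    then have "(\<Sum>i\<in>A. d i u \<bullet> sgn (I i)) \<le> (\<Sum>i\<in>A. norm (d i u))"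
      by (intro sum_mono)
    with le[OF that] show ?thesis by linarith
  qed
  ultimately show ?thesis
    by (rule has_integral_le)
qed

lemma integral_small_near_left_endpoint:
  fixes f :: "real \<Rightarrow> 'a::banach"
  assumes "f integrable_on {a..b}" "a < b" "0 < e"
  obtains d where "a < d" "d \<le> b" "norm (integral {a..d} f) < e"
proof -
  obtain d0 where "0 < d0" and d0: "\<forall>t. a \<le> t \<and> t < a + d0 \<longrightarrow> norm (integral {a..a} f - integral {a..t} f) < e"
    using indefinite_integral_continuous_right[OF assms(1) order_refl assms(2,3)] by blast
  define d where "d = min b (a + d0 / 2)"
  have "a < d" "d \<le> b" "d < a + d0"
    using \<open>0 < d0\<close> assms(2) by (auto simp: d_def)
  with d0 show ?thesis
    by (intro that) auto
qed

definition chains :: "nat \<Rightarrow> real \<Rightarrow> real \<Rightarrow> (nat \<Rightarrow> real) set" where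
  "chains n a b = {t. (\<forall>i\<le>n. t i \<in> {a..b}) \<and> (\<forall>i<n. t i \<le> t (Suc i))}"

definition variation_sum :: "(real \<Rightarrow> 'a::real_normed_vector) \<Rightarrow> nat \<Rightarrow> (nat \<Rightarrow> real) \<Rightarrow> real" where
  "variation_sum f n t = (\<Sum>i<n. norm (f (t (Suc i)) - f (t i)))"

lemma bounded_variation_on_iff_chains:
  "bounded_variation_on a b f \<longleftrightarrow> (\<exists>M. \<forall>n. \<forall>t\<in>chains n a b. variation_sum f n t \<le> M)"
  by (simp add: bounded_variation_on_def chains_def variation_sum_def)

lemma chains_memD: "t \<in> chains n a b \<Longrightarrow> i \<le> n \<Longrightarrow> t i \<in> {a..b}"
  by (simp add: chains_def)

lemma chains_mono: "b \<le> b' \<Longrightarrow> chains n a b \<subseteq> chains n a b'"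
  by (auto simp: chains_def)

lemma const_in_chains: "c \<in> {a..b} \<Longrightarrow> (\<lambda>_. c) \<in> chains n a b"
  by (simp add: chains_def)

lemma variation_sum_const [simp]: "variation_sum f n (\<lambda>_. c) = 0"
  by (simp add: variation_sum_def)

lemma variation_sum_degenerate_chain: "t \<in> chains n a a \<Longrightarrow> variation_sum f n t = 0"
  by (simp add: chains_def variation_sum_def)

lemma shifted_chain_in_chains:
  assumes "t \<in> chains n 0 r" "0 \<le> u"
  shows "(\<lambda>j. max (t j - u) 0) \<in> chains n 0 (max (r - u) 0)"
  using assms by (auto simp: chains_def)

lemma bdd_above_variation_sums:
  assumes "bounded (f ` {a..b})"
  shows "bdd_above (variation_sum f n ` chains n a b)"
proof -
  obtain M where "\<forall>x\<in>f ` {a..b}. norm x \<le> M"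
    using assms by (auto simp: bounded_iff)
  then have M: "\<And>s. s \<in> {a..b} \<Longrightarrow> norm (f s) \<le> M"
    by blast
  have "variation_sum f n t \<le> real n * (2 * M)" if "t \<in> chains n a b" for t
  proof -
    have "norm (f (t (Suc i)) - f (t i)) \<le> 2 * M" if "i < n" for i
      using M[of "t (Suc i)"] M[of "t i"] \<open>t \<in> chains n a b\<close> \<open>i < n\<close>
        norm_triangle_ineq4[of "f (t (Suc i))" "f (t i)"]
      by (auto simp: chains_def)
    then have "(\<Sum>i<n. norm (f (t (Suc i)) - f (t i))) \<le> real (card {..<n}) * (2 * M)"
      by (intro sum_bounded_above) auto
    then show ?thesis
      by (simp add: variation_sum_def)
  qed
  then show ?thesis
    by (rule bdd_aboveI2)
qed

lemma delay_recursive_bound: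
  fixes \<phi> :: "real \<Rightarrow> real"
  assumes "0 \<le> L" "0 \<le> \<delta>"
    and rec: "\<And>r. 0 \<le> r \<Longrightarrow> r \<le> T \<Longrightarrow> \<phi> r \<le> A + L * \<phi> (max (r - \<delta>) 0)"
    and "\<phi> 0 \<le> c"
  shows "0 \<le> r \<Longrightarrow> r \<le> T \<Longrightarrow> r \<le> real k * \<delta> \<Longrightarrow> \<phi> r \<le> ((\<lambda>x. A + L * x) ^^ k) c"
proof (induction k arbitrary: r)
  case 0
  then show ?case using \<open>\<phi> 0 \<le> c\<close> by simp
next
  case (Suc k)
  have "\<phi> (max (r - \<delta>) 0) \<le> ((\<lambda>x. A + L * x) ^^ k) c"
    using Suc \<open>0 \<le> \<delta>\<close> by (intro Suc.IH) (auto simp: algebra_simps)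
  then have "L * \<phi> (max (r - \<delta>) 0) \<le> L * ((\<lambda>x. A + L * x) ^^ k) c"
    using \<open>0 \<le> L\<close> by (rule mult_left_mono)
  then show ?case
    using rec[OF Suc.prems(1,2)] by simp
qed

locale volterra_convolution =
  fixes K :: "real \<Rightarrow> real" and g X :: "real \<Rightarrow> 'a::euclidean_space"
    and x0 :: 'a and T G C :: real
  assumes T_pos: "0 < T"
    and K_nonneg: "\<And>u. 0 \<le> K u"
    and K_integrable: "K integrable_on {0..T}"
    and g_bounded: "\<And>s. s \<in> {0..T} \<Longrightarrow> norm (g s) \<le> G"
    and C_nonneg: "0 \<le> C"
    and g_lipschitz: "\<And>s s'. s \<in> {0..T} \<Longrightarrow> s' \<in> {0..T} \<Longrightarrow> norm (g s - g s') \<le> C * norm (X s - X s')"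
    and solution: "\<And>t. t \<in> {0..T} \<Longrightarrow> ((\<lambda>s. K (t - s) *\<^sub>R g s) has_integral (X t - x0)) {0..t}"
begin

definition conv_integrand :: "real \<Rightarrow> real \<Rightarrow> 'a" where
  "conv_integrand t u = (if u \<in> {0..t} then K u *\<^sub>R g (t - u) else 0)"

lemma G_nonneg: "0 \<le> G"
  using order_trans[OF norm_ge_zero g_bounded[of 0]] T_pos by simp

lemma conv_integrand_has_integral:
  assumes "t \<in> {0..T}"
  shows "(conv_integrand t has_integral (X t - x0)) {0..T}"
proof -
  have "((\<lambda>u. K u *\<^sub>R g (t - u)) has_integral (X t - x0)) (cbox 0 t)"
    using has_integral_reflect_ivl_0[OF solution[OF assms]] by simp
  then have "((\<lambda>u. if u \<in> cbox 0 t then K u *\<^sub>R g (t - u) else 0) has_integral (X t - x0)) (cbox 0 T)"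
    by (rule has_integral_restrict_closed_subinterval) (use assms in auto)
  then show ?thesis
    by (simp add: conv_integrand_def [abs_def])
qed

lemma norm_conv_integrand_le:
  assumes "t \<le> T"
  shows "norm (conv_integrand t u) \<le> G * K u"
  using g_bounded[of "t - u"] K_nonneg[of u] G_nonneg assms
  by (auto simp: conv_integrand_def mult.commute[of G] intro!: mult_left_mono)

lemma bounded_solution: "bounded (X ` {0..T})"
proof -
  have "norm (X t - x0) \<le> integral {0..T} (\<lambda>u. G * K u)" if "t \<in> {0..T}" for t
  proof -
    have "norm (integral {0..T} (conv_integrand t)) \<le> integral {0..T} (\<lambda>u. G * K u)"
      using conv_integrand_has_integral[OF that] K_integrable norm_conv_integrand_le that
      by (intro integral_norm_bound_integral integrable_on_mult_right) auto
    then show ?thesis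
      using integral_unique[OF conv_integrand_has_integral[OF that]] by simp
  qed
  then have "bounded ((\<lambda>t. X t - x0) ` {0..T})"
    unfolding bounded_iff by (intro exI[of _ "integral {0..T} (\<lambda>u. G * K u)"]) auto
  then have "bounded ((\<lambda>y. x0 + y) ` (\<lambda>t. X t - x0) ` {0..T})"
    by (rule bounded_translation)
  then show ?thesis
    by (simp add: image_image)
qed

lemma conv_integrand_increment_le:
  assumes "0 \<le> s" "s \<le> s'" "s' \<le> T" "0 \<le> u"
  shows "norm (conv_integrand s' u - conv_integrand s u)
    \<le> K u * (G * (of_bool (u \<le> s') - of_bool (u \<le> s)) + C * norm (X (max (s' - u) 0) - X (max (s - u) 0)))"
proof -
  consider "u \<le> s" | "s < u" "u \<le> s'" | "s' < u"
    by linarith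
  then show ?thesis
  proof cases
    case 1
    then have "norm (conv_integrand s' u - conv_integrand s u) = K u * norm (g (s' - u) - g (s - u))"
      using assms K_nonneg[of u] by (simp add: conv_integrand_def flip: scaleR_diff_right)
    also have "\<dots> \<le> K u * (C * norm (X (s' - u) - X (s - u)))"
      using g_lipschitz[of "s' - u" "s - u"] assms 1 K_nonneg[of u] by (intro mult_left_mono) auto
    finally show ?thesis
      using 1 assms by simp
  next
    case 2
    then have "norm (conv_integrand s' u - conv_integrand s u) \<le> K u * G"
      using assms K_nonneg[of u] g_bounded[of "s' - u"] by (simp add: conv_integrand_def mult_left_mono)
    then show ?thesis
      using 2 assms K_nonneg[of u] C_nonneg by (simp add: add_increasing2 distrib_left)
  next
    case 3
    then show ?thesis
      using assms K_nonneg[of u] C_nonneg by (simp add: conv_integrand_def)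
  qed
qed

lemma sum_conv_integrand_increments_le:
  assumes "t \<in> chains n 0 T" "0 \<le> u"
  shows "(\<Sum>i<n. norm (conv_integrand (t (Suc i)) u - conv_integrand (t i) u))
    \<le> K u * (G + C * variation_sum X n (\<lambda>j. max (t j - u) 0))"
proof -
  let ?jump = "\<lambda>j. of_bool (u \<le> t j) :: real"
  have "(\<Sum>i<n. norm (conv_integrand (t (Suc i)) u - conv_integrand (t i) u))
      \<le> (\<Sum>i<n. K u * (G * (?jump (Suc i) - ?jump i) + C * norm (X (max (t (Suc i) - u) 0) - X (max (t i - u) 0))))"
    using assms by (intro sum_mono conv_integrand_increment_le) (auto simp: chains_def)
  also have "\<dots> = K u * (G * (\<Sum>i<n. ?jump (Suc i) - ?jump i) + C * variation_sum X n (\<lambda>j. max (t j - u) 0))"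
    by (simp add: variation_sum_def sum_distrib_left sum.distrib distrib_left)
  also have "\<dots> = K u * (G * (?jump n - ?jump 0) + C * variation_sum X n (\<lambda>j. max (t j - u) 0))"
    using sum_lessThan_telescope[of ?jump n] by simp
  also have "\<dots> \<le> K u * (G + C * variation_sum X n (\<lambda>j. max (t j - u) 0))"
    using G_nonneg K_nonneg[of u] by (intro mult_left_mono add_right_mono) auto
  finally show ?thesis .
qed

lemma sum_conv_integrand_increments_delay_bound:
  assumes "0 \<le> \<delta>" "r \<in> {0..T}" "u \<in> {0..T}"
    and bound: "\<And>\<rho> s. \<rho> \<in> {0..T} \<Longrightarrow> s \<in> chains n 0 \<rho> \<Longrightarrow> variation_sum X n s \<le> \<Phi> \<rho>"
    and t: "t \<in> chains n 0 r"
  shows "(\<Sum>i<n. norm (conv_integrand (t (Suc i)) u - conv_integrand (t i) u))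
    \<le> G * K u + C * \<Phi> r * (if u \<in> {0..\<delta>} then K u else 0) + C * \<Phi> (max (r - \<delta>) 0) * K u"
proof -
  define r' where "r' = max (r - \<delta>) 0"
  have r': "r' \<in> {0..T}"
    using assms(1,2) by (auto simp: r'_def)
  define s where "s j = max (t j - u) 0" for j
  have s: "s \<in> chains n 0 (max (r - u) 0)"
    using shifted_chain_in_chains[OF t] assms(3) by (simp add: s_def [abs_def])
  have "variation_sum X n s \<le> (if u \<le> \<delta> then \<Phi> r else \<Phi> r')"
  proof (cases "u \<le> \<delta>")
    case True
    have "max (r - u) 0 \<le> r"
      using assms(2,3) by auto
    then have "s \<in> chains n 0 r"
      using s chains_mono by blast
    then show ?thesis
      using bound[OF assms(2)] True by simp
  next
    case False
    then have "max (r - u) 0 \<le> r'"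
      by (auto simp: r'_def)
    then have "s \<in> chains n 0 r'"
      using s chains_mono by blast
    then show ?thesis
      using bound[OF r'] False by simp
  qed
  have "t \<in> chains n 0 T"
    using t chains_mono[of r T n 0] assms(2) by auto
  then have "(\<Sum>i<n. norm (conv_integrand (t (Suc i)) u - conv_integrand (t i) u))
      \<le> K u * (G + C * variation_sum X n s)"
    using sum_conv_integrand_increments_le assms(3) by (simp add: s_def [abs_def])
  also have "\<dots> \<le> K u * (G + C * (if u \<le> \<delta> then \<Phi> r else \<Phi> r'))"
    using \<open>variation_sum X n s \<le> _\<close> C_nonneg K_nonneg[of u]
    by (intro mult_left_mono add_left_mono) auto
  also have "\<dots> \<le> G * K u + C * \<Phi> r * (if u \<in> {0..\<delta>} then K u else 0) + C * \<Phi> r' * K u"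
    using bound[OF r' const_in_chains[of 0]] r' C_nonneg K_nonneg[of u] assms(3)
    by (auto simp: algebra_simps)
  finally show ?thesis
    by (simp add: r'_def)
qed

lemma variation_sum_recursive_bound:
  assumes "0 \<le> \<delta>" "\<delta> \<le> T" "r \<in> {0..T}"
    and bound: "\<And>\<rho> s. \<rho> \<in> {0..T} \<Longrightarrow> s \<in> chains n 0 \<rho> \<Longrightarrow> variation_sum X n s \<le> \<Phi> \<rho>"
    and t: "t \<in> chains n 0 r"
  shows "variation_sum X n t \<le> G * integral {0..T} K + C * \<Phi> r * integral {0..\<delta>} K
    + C * \<Phi> (max (r - \<delta>) 0) * integral {0..T} K"
proof -
  have t_T: "t \<in> chains n 0 T"
    using t chains_mono[of r T n 0] assms(3) by auto
  have increments: "((\<lambda>u. conv_integrand (t (Suc i)) u - conv_integrand (t i) u)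
      has_integral X (t (Suc i)) - X (t i)) {0..T}" if "i \<in> {..<n}" for i
    using has_integral_diff[OF conv_integrand_has_integral conv_integrand_has_integral,
        OF chains_memD[OF t_T, of "Suc i"] chains_memD[OF t_T, of i]] that by simp
  have "(K has_integral integral {0..T} K) {0..T}"
    using K_integrable by (rule integrable_integral)
  moreover have "((\<lambda>u. if u \<in> {0..\<delta>} then K u else 0) has_integral integral {0..\<delta>} K) {0..T}"
    using has_integral_restrict_closed_subinterval[of K "integral {0..\<delta>} K" 0 \<delta> 0 T]
      integrable_subinterval_real[OF K_integrable, of 0 \<delta>] assms(1,2)
    by (auto intro: integrable_integral)
  ultimately have majorant: "((\<lambda>u. G * K u + C * \<Phi> r * (if u \<in> {0..\<delta>} then K u else 0)
        + C * \<Phi> (max (r - \<delta>) 0) * K u)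
      has_integral G * integral {0..T} K + C * \<Phi> r * integral {0..\<delta>} K
        + C * \<Phi> (max (r - \<delta>) 0) * integral {0..T} K) {0..T}"
    by (intro has_integral_add has_integral_mult_right)
  have pointwise: "(\<Sum>i<n. norm (conv_integrand (t (Suc i)) u - conv_integrand (t i) u))
      \<le> G * K u + C * \<Phi> r * (if u \<in> {0..\<delta>} then K u else 0) + C * \<Phi> (max (r - \<delta>) 0) * K u"
    if "u \<in> {0..T}" for u
    using assms(1,3) that bound t by (rule sum_conv_integrand_increments_delay_bound)
  show ?thesis
    unfolding variation_sum_def
    by (rule sum_norm_has_integral_le[OF finite_lessThan increments majorant pointwise])
qed

lemma small_kernel_interval:
  obtains \<delta> where "0 < \<delta>" "\<delta> \<le> T" "C * integral {0..\<delta>} K \<le> 1 / 2"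
proof -
  obtain \<delta> where \<delta>: "0 < \<delta>" "\<delta> \<le> T" "norm (integral {0..\<delta>} K) < 1 / (2 * (C + 1))"
    using integral_small_near_left_endpoint[OF K_integrable T_pos, of "1 / (2 * (C + 1))"] C_nonneg
    by auto
  have "0 \<le> integral {0..\<delta>} K"
    using integrable_subinterval_real[OF K_integrable] \<delta>(2) K_nonneg
    by (intro Henstock_Kurzweil_Integration.integral_nonneg) auto
  then have "C * integral {0..\<delta>} K \<le> (C + 1) * norm (integral {0..\<delta>} K)"
    using C_nonneg by (intro mult_mono) auto
  also have "\<dots> \<le> (C + 1) * (1 / (2 * (C + 1)))"
    using \<delta>(3) C_nonneg by (intro mult_left_mono) auto
  also have "\<dots> = 1 / 2"
    using C_nonneg by simp
  finally show ?thesis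
    using that \<delta>(1,2) by blast
qed

definition sup_variation_sum :: "nat \<Rightarrow> real \<Rightarrow> real" where
  "sup_variation_sum n \<rho> = (SUP s\<in>chains n 0 \<rho>. variation_sum X n s)"

lemma variation_sum_le_sup:
  assumes "\<rho> \<in> {0..T}" "s \<in> chains n 0 \<rho>"
  shows "variation_sum X n s \<le> sup_variation_sum n \<rho>"
proof -
  have "bounded (X ` {0..\<rho>})"
    using assms(1) by (intro bounded_subset[OF bounded_solution] image_mono) auto
  then show ?thesis
    unfolding sup_variation_sum_def by (intro cSUP_upper assms(2) bdd_above_variation_sums)
qed

lemma sup_variation_sum_0: "sup_variation_sum n 0 \<le> 0"
  unfolding sup_variation_sum_def using const_in_chains[of 0 0 0 n]
  by (intro cSUP_least) (auto simp: variation_sum_degenerate_chain)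

lemma sup_variation_sum_recursion:
  assumes \<delta>: "0 \<le> \<delta>" "\<delta> \<le> T" "C * integral {0..\<delta>} K \<le> 1 / 2" and \<rho>: "0 \<le> \<rho>" "\<rho> \<le> T"
  shows "sup_variation_sum n \<rho>
    \<le> 2 * G * integral {0..T} K + 2 * C * integral {0..T} K * sup_variation_sum n (max (\<rho> - \<delta>) 0)"
proof -
  let ?V = "sup_variation_sum n" and ?\<kappa> = "integral {0..T} K"
  have "(SUP s\<in>chains n 0 \<rho>. variation_sum X n s)
      \<le> G * ?\<kappa> + C * ?V \<rho> * integral {0..\<delta>} K + C * ?V (max (\<rho> - \<delta>) 0) * ?\<kappa>"
    using const_in_chains[of 0 0 \<rho> n] \<delta>(1,2) \<rho>
    by (intro cSUP_least variation_sum_recursive_bound) (auto intro: variation_sum_le_sup)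
  then have "?V \<rho> \<le> G * ?\<kappa> + C * ?V \<rho> * integral {0..\<delta>} K + C * ?V (max (\<rho> - \<delta>) 0) * ?\<kappa>"
    by (simp only: sup_variation_sum_def)
  moreover have "0 \<le> ?V \<rho>"
    using variation_sum_le_sup[of \<rho> "\<lambda>_. 0"] const_in_chains[of 0 0 \<rho> n] \<rho> by simp
  then have "?V \<rho> * (C * integral {0..\<delta>} K) \<le> ?V \<rho> * (1 / 2)"
    using \<delta>(3) by (intro mult_left_mono)
  ultimately show ?thesis
    by (simp add: algebra_simps)
qed

theorem bounded_variation: "bounded_variation_on 0 T X"
proof -
  let ?\<kappa> = "integral {0..T} K"
  obtain \<delta> where \<delta>: "0 < \<delta>" "\<delta> \<le> T" "C * integral {0..\<delta>} K \<le> 1 / 2"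
    by (rule small_kernel_interval)
  obtain m :: nat where "T / \<delta> \<le> real m"
    using real_arch_simple by blast
  then have m: "T \<le> real m * \<delta>"
    using \<delta>(1) by (simp add: field_simps)
  have "0 \<le> 2 * C * ?\<kappa>"
    using C_nonneg K_integrable K_nonneg by (simp add: Henstock_Kurzweil_Integration.integral_nonneg)
  then have V_T: "sup_variation_sum n T \<le> ((\<lambda>x. 2 * G * ?\<kappa> + 2 * C * ?\<kappa> * x) ^^ m) 0" for n
    using sup_variation_sum_recursion[OF less_imp_le[OF \<delta>(1)] \<delta>(2,3)] sup_variation_sum_0 \<delta>(1) T_pos m
    by (intro delay_recursive_bound[where \<phi> = "sup_variation_sum n" and T = T and r = T and \<delta> = \<delta>]) auto
  have "variation_sum X n t \<le> ((\<lambda>x. 2 * G * ?\<kappa> + 2 * C * ?\<kappa> * x) ^^ m) 0"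
    if "t \<in> chains n 0 T" for n t
    using variation_sum_le_sup[OF _ that] V_T[of n] T_pos by simp
  then show ?thesis
    unfolding bounded_variation_on_iff_chains by blast
qed

end

lemma frac_kernel_nonneg: "0 < \<alpha> \<Longrightarrow> 0 \<le> frac_kernel \<alpha> u"
  by (simp add: frac_kernel_def)

lemma frac_kernel_integrable:
  assumes "0 < \<alpha>" "0 \<le> x"
  shows "frac_kernel \<alpha> integrable_on {0..x}"
proof -
  have "((\<lambda>u. u powr (\<alpha> - 1)) has_integral x powr \<alpha> / \<alpha>) {0..x}"
    using has_integral_powr_from_0[of "\<alpha> - 1" x] assms by simp
  then have "(\<lambda>u. u powr (\<alpha> - 1) / Gamma \<alpha>) integrable_on {0..x}"
    by (intro integrable_on_divide has_integral_integrable)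
  then show ?thesis
    by (rule integrable_eq) (auto simp: frac_kernel_def)
qed

theorem mainTheorem8:
  fixes T \<alpha> :: real
    and \<Theta> :: "(real^'k) set" and \<theta>s :: "real^'k"
    and x0 :: "real^'d"
    and a :: "real^'d \<Rightarrow> real^'r^'d"
    and b :: "real^'d \<Rightarrow> real^'k \<Rightarrow> real^'d"
    and X0 :: "real \<Rightarrow> real^'d"
  assumes T_pos: "T > 0"
    and alpha: "1/2 < \<alpha>" "\<alpha> < 1"
    and Theta: "compact \<Theta>" "convex \<Theta>" "interior \<Theta> \<noteq> {}"
    and theta_star: "\<theta>s \<in> interior \<Theta>"
    and A1_cont: "continuous_on UNIV a" "continuous_on (UNIV \<times> \<Theta>) (\<lambda>(x, \<theta>). b x \<theta>)"
    and A1_lip: "\<exists>C>0. \<forall>x x'. norm (a x - a x') \<le> C * norm (x - x') \<and>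
                   (\<forall>\<theta>\<in>\<Theta>. norm (b x \<theta> - b x' \<theta>) \<le> C * norm (x - x'))"
    and b_C1P: "C1P b (interior \<Theta>)"
    and X0_cont: "continuous_on {0..T} X0"
    and X0_eq: "\<forall>t\<in>{0..T}.
       ((\<lambda>s. frac_kernel \<alpha> (t - s) *\<^sub>R b (X0 s) \<theta>s) has_integral (X0 t - x0)) {0..t}"
  shows "bounded_variation_on 0 T X0"
proof -
  obtain C where "C > 0" and C: "\<And>x x'. \<forall>\<theta>\<in>\<Theta>. norm (b x \<theta> - b x' \<theta>) \<le> C * norm (x - x')"
    using A1_lip by blast
  have \<theta>s: "\<theta>s \<in> \<Theta>"
    using theta_star interior_subset by blast
  define g where "g s = b (X0 s) \<theta>s" for s
  have "continuous_on {0..T} (\<lambda>s. (X0 s, \<theta>s))"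
    using X0_cont by (intro continuous_intros)
  moreover have "(\<lambda>s. (X0 s, \<theta>s)) ` {0..T} \<subseteq> UNIV \<times> \<Theta>"
    using \<theta>s by auto
  ultimately have "continuous_on {0..T} g"
    using continuous_on_compose2[OF A1_cont(2), of "{0..T}" "\<lambda>s. (X0 s, \<theta>s)"]
    by (simp add: g_def [abs_def])
  then have "bounded (g ` {0..T})"
    by (intro compact_imp_bounded compact_continuous_image) auto
  then obtain G where G: "\<forall>y\<in>g ` {0..T}. norm y \<le> G"
    by (auto simp: bounded_iff)
  interpret volterra_convolution "frac_kernel \<alpha>" g X0 x0 T G C
  proof
    show "frac_kernel \<alpha> integrable_on {0..T}"
      using frac_kernel_integrable alpha T_pos by simp
  qed (use T_pos alpha frac_kernel_nonneg G C \<theta>s \<open>C > 0\<close> X0_eq in \<open>auto simp: g_def\<close>)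
  show ?thesis
    by (rule bounded_variation)
qed

end
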